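(* In Setup B, let $1\le i\le m-1$ with $\gcd(i,m)=1$, $1\le j\le f(\tau_{-i})$ and $1\le j'\le f(\tau_{pi})$. Then the coefficient of $\omega_{-pi,j'}$ in $\psi'_{\tau_i}(\zeta_{i,j})$ equals $$-\sum_{k=1}^r e_{i,k}\, r_{i,j,k}\, q_{j',k},$$ where $e_{i,k}=\lfloor p\langle ia_k/m\rangle\rfloor$, $q_{j',k}$ is the coefficient of $x^{j'-1}$ in $\prod_{s\ne k}(x-x_s)$, and $r_{i,j,k}$ is the residue at $x=0$ of the rational function $\prod_{s=1}^r(x-x_s)^{e_{i,s}}\big/\big(x^{pj}(x-x_k)\big)$, namely $$r_{i,j,k}=(-1)^N\sum_{n_1+\dots+n_r=N}\binom{e_{i,1}}{n_1}\cdots\binom{e_{i,k}-1}{n_k}\cdots\binom{e_{i,r}}{n_r}x_1^{n_1}\cdots x_r^{n_r},\qquad N=\sum_{s=1}^r e_{i,s}-pj.$$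
   Context: Setup B. Let $m\ge2$, $r\ge3$, integers $1\le a_k\le m-1$ ($1\le k\le r$) with $\sum a_k\equiv0\pmod m$ and $\gcd(a_1,\dots,a_r,m)=1$. Let $p$ be a prime, $p\nmid m$, $k_0=\overline{\mathbb{F}}_p$, $x_1,\dots,x_r\in k_0$ distinct, and $C$ the smooth projective curve normalizing $y^m=\prod_k(x-x_k)^{a_k}$, with $G=\mathbb{Z}/m$ acting on $y$ by a primitive $m$-th root of unity $\zeta$; $\pi:C\to\mathbb{P}^1$ is the $x$-coordinate. Characters $\tau_i(a)=\zeta^{ia}$, $i\in\mathbb{Z}/m$; $p\tau_i:=\tau_{pi}$, $\tau_i^*:=\tau_{-i}$. $\langle t\rangle$ is the fractional part, and $f(\tau_i)=-1+\sum_k\langle -ia_k/m\rangle$ for $i\not\equiv0$ (so $f(\tau_i^* )=f(\tau_{-i})=-1+\sum_k\langle ia_k/m\rangle$). Put $v_i=y^i/\prod_k(x-x_k)^{\lfloor ia_k/m\rfloor}$ (indices $i$ read mod $m$ in $\{1,\dots,m-1\}$). Let $U=\pi^{-1}(\mathbb{P}^1\setminus\{\infty\})$, $V=\pi^{-1}(\mathbb{P}^1\setminus\{0\})$, and compute $Q=H^1(C,\mathcal{O}_C)=\mathcal{O}_C(U\cap V)/(\mathcal{O}_C(U)+\mathcal{O}_C(V))$. Then $\zeta_{i,j}:=[v_i/x^j]$, $1\le j\le f(\tau_{-i})$, is a basis of the $\tau_i$-isotypic part $Q_{\tau_i}$, and $\omega_{i,j}:=x^{j-1}dx/v_i$, $1\le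 j\le f(\tau_{-i})$, are regular differentials on $C$. Let $\iota:Q\to\mathcal{O}_C(U\cap V)$ be the $k_0$-linear map $\zeta_{i,j}\mapsto v_i/x^j$; then $\mathcal{O}_C(U\cap V)=\mathcal{O}_C(U)\oplus\iota(Q)\oplus\mathcal{O}_C(V)$, and let $\pi_1$ be the projection onto $\mathcal{O}_C(U)$. For $\gcd(i,m)=1$ and $\alpha\in Q_{\tau_i}$, set $f_1=\pi_1(\iota(\alpha)^p)\in\mathcal{O}_C(U)$; then $df_1=P(x)\,dx/v_{-pi}$ for a polynomial $P$, and $\psi'_{\tau_i}(\alpha):=\sum_{k=1}^{f(\tau_{pi})}c_k\,\omega_{-pi,k}$ where $c_k$ is the coefficient of $x^{k-1}$ in $P$ (the "coefficient of $\omega_{-pi,k}$ in $df_1$"). *)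

theory Defs
  imports "HOL-Computational_Algebra.Computational_Algebra"
begin

text \<open>The function field of C is
  k0(x)[y]/(y^m - h(x)), h = prod_k (x - x_k)^(a_k).  Every element of the
  tau_n-isotypic part (0 <= n < m) is uniquely R * y^n with R in k0(x);
  we represent such an element by the pair (n, R), R :: 'k poly fract.\<close>

definition hpoly :: "nat \<Rightarrow> (nat \<Rightarrow> nat) \<Rightarrow> (nat \<Rightarrow> 'k::field) \<Rightarrow> 'k poly" where
  "hpoly r a x = (\<Prod>k\<in>{1..r}. [:- x k, 1:] ^ a k)"

definition Xf :: "'k::field poly fract" where
  "Xf = Fract [:0, 1:] 1"

text \<open>v_n = vcoef n * y^n, i.e. y^n / prod_k (x - x_k)^floor(n a_k / m).\<close>
definition vcoef :: "nat \<Rightarrow> nat \<Rightarrow> (nat \<Rightarrow> nat) \<Rightarrow> (nat \<Rightarrow> 'k::field) \<Rightarrow> nat \<Rightarrow> 'k poly fract" where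
  "vcoef m r a x n = inverse (Fract (\<Prod>k\<in>{1..r}. [:- x k, 1:] ^ ((n * a k) div m)) 1)"

text \<open>(R y^n)^m = R^m h^n lies in k0(x); R y^n is integral over a (normal) subring
  A of k0(x) iff R^m h^n lies in A.  Regular functions on U, V, U\<inter>V are the
  integral closures of k0[x], k0[1/x], k0[x,1/x].\<close>
definition mpow :: "nat \<Rightarrow> nat \<Rightarrow> (nat \<Rightarrow> nat) \<Rightarrow> (nat \<Rightarrow> 'k::field) \<Rightarrow> nat \<Rightarrow> 'k poly fract \<Rightarrow> 'k poly fract" where
  "mpow m r a x n R = R ^ m * Fract (hpoly r a x ^ n) 1"

definition inU :: "nat \<Rightarrow> nat \<Rightarrow> (nat \<Rightarrow> nat) \<Rightarrow> (nat \<Rightarrow> 'k::field) \<Rightarrow> nat \<Rightarrow> 'k poly fract \<Rightarrow> bool" where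
  "inU m r a x n R \<longleftrightarrow> (\<exists>q. mpow m r a x n R = Fract q 1)"

definition inV :: "nat \<Rightarrow> nat \<Rightarrow> (nat \<Rightarrow> nat) \<Rightarrow> (nat \<Rightarrow> 'k::field) \<Rightarrow> nat \<Rightarrow> 'k poly fract \<Rightarrow> bool" where
  "inV m r a x n R \<longleftrightarrow> (\<exists>q e. degree q \<le> e \<and> mpow m r a x n R = Fract q ([:0, 1:] ^ e))"

definition inUV :: "nat \<Rightarrow> nat \<Rightarrow> (nat \<Rightarrow> nat) \<Rightarrow> (nat \<Rightarrow> 'k::field) \<Rightarrow> nat \<Rightarrow> 'k poly fract \<Rightarrow> bool" where
  "inUV m r a x n R \<longleftrightarrow> (\<exists>q e. mpow m r a x n R = Fract q ([:0, 1:] ^ e))"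

definition ftau :: "nat \<Rightarrow> nat \<Rightarrow> (nat \<Rightarrow> nat) \<Rightarrow> int \<Rightarrow> int" where
  "ftau m r a t = -1 + (\<Sum>k\<in>{1..r}. (- t * int (a k)) mod int m) div int m"

text \<open>The projection pi_1 onto O(U), on the tau_n-isotypic component, w.r.t.
  O(U\<inter>V) = O(U) + iota(Q) + O(V), iota(Q)_{tau_n} spanned by v_n / x^j.\<close>
definition proj1 :: "nat \<Rightarrow> nat \<Rightarrow> (nat \<Rightarrow> nat) \<Rightarrow> (nat \<Rightarrow> 'k::field) \<Rightarrow> nat \<Rightarrow> 'k poly fract \<Rightarrow> 'k poly fract" where
  "proj1 m r a x n R = (THE U. inU m r a x n U \<and>
      (\<exists>c W. inV m r a x n W \<and>
         R = U + (\<Sum>j\<in>{1..nat (ftau m r a (- int n))}. Fract [:c j:] 1 * vcoef m r a x n / Xf ^ j) + W))"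

definition fract_deriv :: "'k::field poly fract \<Rightarrow> 'k poly fract" where
  "fract_deriv R = (let (u, v) = (SOME (u, v). v \<noteq> 0 \<and> R = Fract u v)
                     in Fract (pderiv u * v - u * pderiv v) (v * v))"

text \<open>d(R y^n)/dx = (R' + R * n h' / (m h)) y^n, since m y^(m-1) dy = h' dx.\<close>
definition dhom :: "nat \<Rightarrow> nat \<Rightarrow> (nat \<Rightarrow> nat) \<Rightarrow> (nat \<Rightarrow> 'k::field) \<Rightarrow> nat \<Rightarrow> 'k poly fract \<Rightarrow> 'k poly fract" where
  "dhom m r a x n R = fract_deriv R +
     R * Fract (smult (of_nat n) (pderiv (hpoly r a x))) (smult (of_nat m) (hpoly r a x))"

text \<open>Coefficient of omega_{-pi,j'} in psi'_{tau_i}(zeta_{i,j}):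
  iota(zeta_{i,j}) = v_i / x^j; its p-th power is R y^(pi mod m) with
  R = (vcoef i / x^j)^p * h^(pi div m); f_1 = pi_1 of it; df_1 = D y^(n') dx,
  and P = D * y^(n') * v_{-pi}.\<close>
definition psi_coeff :: "nat \<Rightarrow> nat \<Rightarrow> (nat \<Rightarrow> nat) \<Rightarrow> (nat \<Rightarrow> 'k::field) \<Rightarrow> nat \<Rightarrow> nat \<Rightarrow> nat \<Rightarrow> nat \<Rightarrow> 'k" where
  "psi_coeff m r a x p i j j' =
    (let n1 = (p * i) mod m;
         R = (vcoef m r a x i / Xf ^ j) ^ p * Fract (hpoly r a x ^ ((p * i) div m)) 1;
         F = proj1 m r a x n1 R;
         D = dhom m r a x n1 F;
         n2 = (m - n1) mod m;
         Pf = D * vcoef m r a x n2 * Fract (hpoly r a x ^ ((n1 + n2) div m)) 1;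
         P = (THE P. Pf = Fract P 1)
     in coeff P (j' - 1))"

definition e_ik :: "nat \<Rightarrow> (nat \<Rightarrow> nat) \<Rightarrow> nat \<Rightarrow> nat \<Rightarrow> nat \<Rightarrow> nat" where
  "e_ik m a p i k = (p * ((i * a k) mod m)) div m"

definition q_coeff :: "nat \<Rightarrow> (nat \<Rightarrow> 'k::field) \<Rightarrow> nat \<Rightarrow> nat \<Rightarrow> 'k" where
  "q_coeff r x j' k = coeff (\<Prod>s\<in>{1..r} - {k}. [:- x s, 1:]) (j' - 1)"

definition r_coeff :: "nat \<Rightarrow> nat \<Rightarrow> (nat \<Rightarrow> nat) \<Rightarrow> (nat \<Rightarrow> 'k::field) \<Rightarrow> nat \<Rightarrow> nat \<Rightarrow> nat \<Rightarrow> nat \<Rightarrow> 'k" where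
  "r_coeff m r a x p i j k =
    (let N = (\<Sum>s\<in>{1..r}. int (e_ik m a p i s)) - int (p * j)
     in (-1) ^ nat N *
        (\<Sum>n\<in>{n :: nat \<Rightarrow> nat. (\<forall>s. s \<notin> {1..r} \<longrightarrow> n s = 0) \<and> int (sum n {1..r}) = N}.
           \<Prod>s\<in>{1..r}. of_int \<lfloor>(of_int (int (e_ik m a p i s) - (if s = k then 1 else 0)) :: rat) gchoose n s\<rfloor> * x s ^ n s))"

end

theory Submission
  imports Defs
begin

text \<open>The p-th power of \<iota>(\<zeta>_{i,j}) = v_i/x^j is G y^n/(D_n x^{pj}), where n = pi mod m,
  G = \<Prod>(x - x_k)^{e_{i,k}} and D_n is the denominator of v_n. Its projection to O(U) keeps
  exactly the part of G divisible by x^{pj}, so f_1 = (G >> pj) y^n/D_n, writing >> for the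
  shift of coefficients. Differentiating with m dy/y = dh/h and multiplying by v_{-pi},
  the polynomial P becomes H (G >> pj)' - (G >> pj) \<Sigma>_k e_{i,k} H_k, where H = \<Prod>(x - x_k)
  and H_k = H/(x - x_k). As p divides pj, the shift commutes with d/dx, so the identity
  H G' = G \<Sigma>_k e_{i,k} H_k survives the shift up to the boundary terms
  -\<Sigma>_k e_{i,k} c_k H_k, where c_k is the coefficient of x^{pj-1} in G/(x - x_k); that
  coefficient is the residue r_{i,j,k}, and the coefficient of x^{j'-1} in H_k is q_{j',k}.\<close>

section \<open>Rational functions with poles only at 0\<close>

lemma to_fract_power: "to_fract (a ^ n) = to_fract a ^ n"
  by (induct n) simp_all

lemma to_fract_of_nat: "to_fract (of_nat n) = of_nat n"
  by (simp add: to_fract_def of_nat_fract)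

lemma power_Fract: "Fract (a::'a::idom) b ^ n = Fract (a ^ n) (b ^ n)"
  by (induct n) (simp_all add: One_fract_def)

lemma The_Fract_1_eq: "(THE P. Fract q 1 = Fract P 1) = (q :: 'a::idom)"
  by (rule the_equality) (simp_all add: eq_fract)

lemma order_power: "p \<noteq> 0 \<Longrightarrow> order c (p ^ n) = n * order c p"
  by (induct n) (auto simp: order_mult)

lemma fract_no_common_root_representation:
  fixes T :: "'k::field poly fract"
  obtains u v where "v \<noteq> 0" "T = Fract u v" "\<And>c. poly u c = 0 \<Longrightarrow> poly v c \<noteq> 0"
proof -
  obtain u v where "v \<noteq> 0" "T = Fract u v"
    and least: "\<And>u' v'. v' \<noteq> 0 \<Longrightarrow> T = Fract u' v' \<Longrightarrow> degree v \<le> degree v'"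
  proof -
    obtain d where "\<exists>u v. v \<noteq> 0 \<and> T = Fract u v \<and> degree v = d"
      and "\<And>d'. d' < d \<Longrightarrow> \<not> (\<exists>u v. v \<noteq> 0 \<and> T = Fract u v \<and> degree v = d')"
      using exists_least_iff[of "\<lambda>d. \<exists>u v. v \<noteq> 0 \<and> T = Fract u v \<and> degree v = d"]
      by (cases T) blast
    then show ?thesis using that by (metis not_le)
  qed
  moreover have "poly v c \<noteq> 0" if u_c: "poly u c = 0" for c
  proof
    assume "poly v c = 0"
    then obtain u1 v1 where uv: "u = [:-c,1:] * u1" "v = [:-c,1:] * v1"
      using u_c by (meson dvdE poly_eq_0_iff_dvd)
    then have "v1 \<noteq> 0" "T = Fract u1 v1"
      using \<open>v \<noteq> 0\<close> \<open>T = Fract u v\<close> mult_fract_cancel[of "[:-c,1:]" u1 v1] by auto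
    moreover have "degree v = Suc (degree v1)"
      unfolding uv(2) using \<open>v1 \<noteq> 0\<close> by (subst degree_mult_eq) auto
    ultimately show False using least[of v1 u1] by simp
  qed
  ultimately show ?thesis using that by blast
qed

text \<open>A pole c \<noteq> 0 of T would be a pole of order at least m of T^m E, as E vanishes to
  order less than m at c.\<close>
lemma fract_denominator_X_power:
  fixes T :: "'k::alg_closed_field poly fract"
  assumes m: "m > 0" and E: "E \<noteq> 0" and ord: "\<And>c. order c E < m"
    and eq: "T ^ m * to_fract E = Fract q ([:0,1:] ^ e)"
  obtains u k where "T = Fract u ([:0,1:] ^ k)" "u ^ m * E * [:0,1:] ^ e = q * [:0,1:] ^ (m * k)"
    "k > 0 \<Longrightarrow> poly u 0 \<noteq> 0"
proof -
  obtain u v where v0: "v \<noteq> 0" and T: "T = Fract u v"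
    and cop: "\<And>c. poly u c = 0 \<Longrightarrow> poly v c \<noteq> 0"
    using fract_no_common_root_representation[of T] by blast
  have E1: "u ^ m * E * [:0,1:] ^ e = q * v ^ m"
    using eq v0 by (simp add: T to_fract_def power_Fract eq_fract)
  have v_root_0: "c = 0" if "poly v c = 0" for c
  proof (rule ccontr)
    assume c: "c \<noteq> 0"
    have "poly u c \<noteq> 0" using cop that by blast
    then have u0: "u \<noteq> 0" by auto
    then have q0: "q \<noteq> 0" using E1 E v0 by auto
    have "order c (u ^ m * E * [:0,1:] ^ e) = order c E"
      using u0 E c \<open>poly u c \<noteq> 0\<close> by (simp add: order_mult order_power order_0I)
    moreover have "order c v > 0" using v0 that by (simp add: order_gt_0_iff)
    then have "order c (q * v ^ m) \<ge> m"
      using q0 v0 by (simp add: order_mult order_power trans_le_add2)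
    ultimately show False using E1 ord[of c] by simp
  qed
  obtain w where w: "v = [:0,1:] ^ order 0 v * w" "\<not> [:0,1:] dvd w"
    using order_decomp[OF v0, of 0] by auto
  have "degree w = 0"
  proof (rule ccontr)
    assume "degree w \<noteq> 0"
    then obtain c where c: "poly w c = 0" using alg_closed_imp_poly_has_root by blast
    then have "poly v c = 0" by (subst w(1)) simp
    then have "c = 0" by (rule v_root_0)
    then show False using c w(2) by (simp add: poly_eq_0_iff_dvd)
  qed
  then obtain d where d: "w = [:d:]" by (metis degree_eq_zeroE)
  define k where "k = order 0 v"
  define u' where "u' = smult (inverse d) u"
  have d0: "d \<noteq> 0" using d w v0 by auto
  have vv: "v = smult d ([:0,1:] ^ k)" using w(1) d by (simp add: k_def)
  have uu: "u = smult d u'" using d0 by (simp add: u'_def)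
  show ?thesis
  proof
    show "T = Fract u' ([:0,1:] ^ k)"
      unfolding T vv uu using mult_fract_cancel[of "[:d:]" u' "[:0,1:] ^ k"] d0 by simp
    have "smult (d ^ m) (u' ^ m * E * [:0,1:] ^ e) = smult (d ^ m) (q * [:0,1:] ^ (m * k))"
      using E1 unfolding uu vv by (simp add: smult_power power_mult mult.commute[of m k])
    then show "u' ^ m * E * [:0,1:] ^ e = q * [:0,1:] ^ (m * k)"
      using d0 by (simp add: smult_eq_iff)
    assume "k > 0"
    then have "poly v 0 = 0" by (simp add: vv)
    then have "poly u 0 \<noteq> 0" using cop by blast
    then show "poly u' 0 \<noteq> 0" using d0 by (simp add: uu)
  qed
qed

section \<open>Products of linear factors\<close>

definition factor_prod :: "(nat \<Rightarrow> 'k::field) \<Rightarrow> nat set \<Rightarrow> (nat \<Rightarrow> nat) \<Rightarrow> 'k poly" where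
  "factor_prod x S d = (\<Prod>k\<in>S. [:- x k, 1:] ^ d k)"

lemma factor_prod_mult: "factor_prod x S d * factor_prod x S d' = factor_prod x S (\<lambda>k. d k + d' k)"
  by (simp add: factor_prod_def power_add prod.distrib)

lemma factor_prod_power: "factor_prod x S d ^ n = factor_prod x S (\<lambda>k. n * d k)"
  by (simp add: factor_prod_def prod_power_distrib flip: power_mult) (simp add: mult.commute)

lemma factor_prod_nonzero [simp]: "factor_prod x S d \<noteq> 0"
  by (cases "finite S") (auto simp: factor_prod_def prod_zero_iff)

lemma factor_prod_cong: "(\<And>k. k \<in> S \<Longrightarrow> d k = d' k) \<Longrightarrow> factor_prod x S d = factor_prod x S d'"
  by (simp add: factor_prod_def)

lemma factor_prod_remove:
  "finite S \<Longrightarrow> k \<in> S \<Longrightarrow> factor_prod x S d = [:- x k, 1:] ^ d k * factor_prod x (S - {k}) d"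
  by (simp add: factor_prod_def prod.remove)

lemma factor_prod_decrement:
  assumes "finite S" "k \<in> S" "d k > 0"
  shows "factor_prod x S d = [:- x k, 1:] * factor_prod x S (d(k := d k - 1))"
proof -
  have "factor_prod x S (d(k := d k - 1)) = [:- x k, 1:] ^ (d k - 1) * factor_prod x (S - {k}) d"
    using factor_prod_remove[OF assms(1,2), of x "d(k := d k - 1)"] by (simp add: factor_prod_def)
  moreover have "[:- x k, 1:] ^ d k = [:- x k, 1:] * [:- x k, 1:] ^ (d k - 1)"
    using assms(3) by (metis Suc_diff_1 power_Suc)
  ultimately show ?thesis
    by (simp only: factor_prod_remove[OF assms(1,2), of x d] mult.assoc)
qed

lemma degree_factor_prod: "finite S \<Longrightarrow> degree (factor_prod x S d) = (\<Sum>k\<in>S. d k)"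
  unfolding factor_prod_def by (subst degree_prod_eq_sum_degree) (auto simp: degree_linear_power)

lemma order_factor_prod:
  "finite S \<Longrightarrow> order c (factor_prod x S d) = (\<Sum>k\<in>S. if x k = c then d k else 0)"
proof (induct S rule: finite_induct)
  case (insert k S)
  have "order c ([:- x k, 1:] ^ d k) = (if x k = c then d k else 0)"
    using order_power_n_n[of c "d k"] by (auto simp: order_power intro!: order_0I)
  then show ?case
    using insert by (simp add: factor_prod_def order_mult prod_zero_iff)
qed (simp add: factor_prod_def)

lemma order_factor_prod_less:
  assumes "finite S" "inj_on x S" "\<And>k. k \<in> S \<Longrightarrow> d k < m" "m > 0"
  shows "order c (factor_prod x S d) < m"
proof (cases "\<exists>k\<in>S. x k = c")
  case True
  then obtain k where k: "k \<in> S" "x k = c" by blast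
  have "(\<Sum>s\<in>S. if x s = c then d s else 0) = (\<Sum>s\<in>S. if s = k then d s else 0)"
    using assms(2) k by (intro sum.cong) (auto dest: inj_onD)
  then show ?thesis using k assms by (simp add: order_factor_prod)
qed (use assms in \<open>simp add: order_factor_prod\<close>)

lemma pderiv_factor_prod:
  assumes "finite S"
  shows "pderiv (factor_prod x S d) = (\<Sum>k\<in>S. smult (of_nat (d k)) (factor_prod x S (d(k := d k - 1))))"
  unfolding factor_prod_def pderiv_prod
proof (intro sum.cong refl)
  fix k assume k: "k \<in> S"
  have "(\<Prod>s\<in>S. [:- x s, 1:] ^ (d(k := d k - 1)) s) = [:- x k, 1:] ^ (d k - 1) * factor_prod x (S - {k}) d"
    using factor_prod_remove[OF assms k, of x "d(k := d k - 1)"] by (simp add: factor_prod_def)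
  then show "(\<Prod>s\<in>S - {k}. [:- x s, 1:] ^ d s) * pderiv ([:- x k, 1:] ^ d k) =
      smult (of_nat (d k)) (\<Prod>s\<in>S. [:- x s, 1:] ^ (d(k := d k - 1)) s)"
    by (simp add: pderiv_power pderiv_pCons factor_prod_def mult_ac)
qed

lemma pderiv_factor_prod_logarithmic:
  assumes S: "finite S"
  shows "pderiv (factor_prod x S d) * (\<Prod>s\<in>S. [:- x s, 1:])
       = factor_prod x S d * (\<Sum>k\<in>S. smult (of_nat (d k)) (\<Prod>s\<in>S - {k}. [:- x s, 1:]))"
proof -
  have "smult (of_nat (d k)) (factor_prod x S (d(k := d k - 1)) * (\<Prod>s\<in>S. [:- x s, 1:]))
      = smult (of_nat (d k)) (factor_prod x S d * (\<Prod>s\<in>S - {k}. [:- x s, 1:]))" if k: "k \<in> S" for k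
  proof (cases "d k = 0")
    case False
    then have dk: "d k > 0" by simp
    show ?thesis
      unfolding factor_prod_decrement[where d = d, OF S k dk] prod.remove[OF S k, of "\<lambda>s. [:- x s, 1:]"]
      by (simp only: mult_ac)
  qed simp
  then show ?thesis
    by (simp add: pderiv_factor_prod[OF S] sum_distrib_left sum_distrib_right mult_smult_right)
qed

section \<open>Shifting coefficients\<close>

lemma poly_shift_add: "poly_shift N (p + q) = poly_shift N p + poly_shift N q"
  by (rule poly_eqI) (simp add: coeff_poly_shift)

lemma poly_shift_smult: "poly_shift N (smult c p) = smult c (poly_shift N p)"
  by (rule poly_eqI) (simp add: coeff_poly_shift)

lemma poly_shift_sum: "poly_shift N (\<Sum>k\<in>S. f k) = (\<Sum>k\<in>S. poly_shift N (f k))"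
  by (induct S rule: infinite_finite_induct) (simp_all add: poly_shift_add)

lemma smult_sum_right: "smult c (\<Sum>k\<in>S. f k) = (\<Sum>k\<in>S. smult c (f k))"
  by (induct S rule: infinite_finite_induct) (simp_all add: smult_add_right)

lemma poly_shift_pderiv:
  assumes "(of_nat N :: 'a::field) = 0"
  shows "poly_shift N (pderiv (p :: 'a poly)) = pderiv (poly_shift N p)"
proof (rule poly_eqI)
  fix i
  have "(of_nat (Suc (i + N)) :: 'a) = of_nat (Suc i)" using assms by simp
  then show "coeff (poly_shift N (pderiv p)) i = coeff (pderiv (poly_shift N p)) i"
    by (simp add: coeff_poly_shift coeff_pderiv)
qed

lemma poly_shift_linear_mult:
  fixes q :: "'a::comm_ring_1 poly"
  assumes "N \<ge> 1"
  shows "poly_shift N ([:-c, 1:] * q) = [:-c, 1:] * poly_shift N q + [:coeff q (N - 1):]"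
proof (rule poly_eqI)
  fix i
  show "coeff (poly_shift N ([:-c, 1:] * q)) i = coeff ([:-c, 1:] * poly_shift N q + [:coeff q (N - 1):]) i"
    using assms by (cases i) (auto simp: coeff_poly_shift coeff_pCons Suc_diff_le split: nat.split)
qed

text \<open>The shift by N commutes with d/dx as N = 0 in 'k, so the logarithmic derivative
  identity survives the shift, up to the terms produced by
  poly_shift_linear_mult.\<close>
lemma poly_shift_factor_prod_logarithmic:
  fixes x :: "nat \<Rightarrow> 'k::field" and e :: "nat \<Rightarrow> nat"
  assumes S: "finite S" and N: "N \<ge> 1" "(of_nat N :: 'k) = 0"
  defines "G \<equiv> poly_shift N (factor_prod x S e)"
  shows "(\<Prod>s\<in>S. [:- x s, 1:]) * pderiv G
           - G * (\<Sum>k\<in>S. smult (of_nat (e k)) (\<Prod>s\<in>S - {k}. [:- x s, 1:]))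
         = - (\<Sum>k\<in>S. smult (of_nat (e k) * coeff (factor_prod x S (e(k := e k - 1))) (N - 1))
                         (\<Prod>s\<in>S - {k}. [:- x s, 1:]))"
proof -
  define Gk where "Gk k = factor_prod x S (e(k := e k - 1))" for k
  define Hk where "Hk k = (\<Prod>s\<in>S - {k}. [:- x s, 1:])" for k
  have summand: "(\<Prod>s\<in>S. [:- x s, 1:]) * smult (of_nat (e k)) (poly_shift N (Gk k)) - G * smult (of_nat (e k)) (Hk k)
      = - smult (of_nat (e k) * coeff (Gk k) (N - 1)) (Hk k)" if k: "k \<in> S" for k
  proof (cases "e k = 0")
    case False
    then have "factor_prod x S e = [:- x k, 1:] * Gk k"
      unfolding Gk_def by (intro factor_prod_decrement[OF S k]) simp
    then have G_split: "G = [:- x k, 1:] * poly_shift N (Gk k) + [:coeff (Gk k) (N - 1):]"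
      unfolding G_def by (simp only: poly_shift_linear_mult[OF N(1)])
    have H_split: "(\<Prod>s\<in>S. [:- x s, 1:]) = [:- x k, 1:] * Hk k"
      unfolding Hk_def using S k by (simp add: prod.remove)
    show ?thesis unfolding G_split H_split
      by (simp add: algebra_simps smult_add_right flip: smult_smult) (simp add: smult_smult mult.commute)
  qed simp
  have "pderiv G = (\<Sum>k\<in>S. smult (of_nat (e k)) (poly_shift N (Gk k)))"
    unfolding G_def Gk_def
    by (simp add: poly_shift_pderiv[OF N(2), symmetric] pderiv_factor_prod[OF S] poly_shift_sum poly_shift_smult)
  then have "(\<Prod>s\<in>S. [:- x s, 1:]) * pderiv G - G * (\<Sum>k\<in>S. smult (of_nat (e k)) (Hk k))
      = (\<Sum>k\<in>S. (\<Prod>s\<in>S. [:- x s, 1:]) * smult (of_nat (e k)) (poly_shift N (Gk k))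
                  - G * smult (of_nat (e k)) (Hk k))"
    by (simp add: sum_distrib_left sum_subtractf)
  also have "\<dots> = - (\<Sum>k\<in>S. smult (of_nat (e k) * coeff (Gk k) (N - 1)) (Hk k))"
    using summand by (simp add: sum_negf)
  finally show ?thesis unfolding Gk_def Hk_def .
qed

section \<open>Coefficients of products of linear factors\<close>

lemma linear_power_expand:
  "[:-c, 1:] ^ d = (\<Sum>k\<le>d. monom (of_nat (d choose k) * (-c) ^ k) (d - k))"
proof -
  have "[:-c, 1:] = [:-c:] + monom 1 1" by (simp add: monom_altdef)
  then have "[:-c, 1:] ^ d = (\<Sum>k\<le>d. of_nat (d choose k) * [:-c:] ^ k * monom 1 1 ^ (d - k))"
    by (simp add: binomial_ring)
  also have "\<dots> = (\<Sum>k\<le>d. monom (of_nat (d choose k) * (-c) ^ k) (d - k))"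
    by (intro sum.cong refl)
      (simp add: of_nat_poly poly_const_pow monom_power flip: smult_monom, simp add: smult_monom mult.commute)
  finally show ?thesis .
qed

lemma prod_monom: "finite S \<Longrightarrow> (\<Prod>s\<in>S. monom (c s) (e s)) = monom (\<Prod>s\<in>S. c s) (\<Sum>s\<in>S. e s)"
  by (induct S rule: finite_induct) (simp_all add: mult_monom)

lemma coeff_factor_prod_PiE:
  assumes S: "finite S" and t: "t \<le> sum d S"
  shows "coeff (factor_prod x S d) t = (\<Sum>g\<in>{g\<in>PiE S (\<lambda>s. {..d s}). sum g S = sum d S - t}.
            \<Prod>s\<in>S. of_nat (d s choose g s) * (- x s) ^ g s)"
proof -
  have "factor_prod x S d = (\<Prod>s\<in>S. \<Sum>k\<le>d s. monom (of_nat (d s choose k) * (- x s) ^ k) (d s - k))"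
    unfolding factor_prod_def by (simp add: linear_power_expand)
  also have "\<dots> = (\<Sum>g\<in>PiE S (\<lambda>s. {..d s}).
                   \<Prod>s\<in>S. monom (of_nat (d s choose g s) * (- x s) ^ g s) (d s - g s))"
    by (rule prod_sum_PiE) (use S in auto)
  also have "\<dots> = (\<Sum>g\<in>PiE S (\<lambda>s. {..d s}).
          monom (\<Prod>s\<in>S. of_nat (d s choose g s) * (- x s) ^ g s) (\<Sum>s\<in>S. d s - g s))"
    by (intro sum.cong refl prod_monom S)
  moreover have "((\<Sum>s\<in>S. d s - g s) = t) = (sum g S = sum d S - t)" if g: "g \<in> PiE S (\<lambda>s. {..d s})" for g
  proof -
    have le: "\<And>s. s \<in> S \<Longrightarrow> g s \<le> d s" using g by auto
    then have "(\<Sum>s\<in>S. d s - g s) = sum d S - sum g S" by (simp add: sum_subtractf_nat)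
    moreover have "sum g S \<le> sum d S" using le by (intro sum_mono)
    ultimately show ?thesis using t by auto
  qed
  ultimately show ?thesis
    by (simp add: coeff_sum sum.inter_filter[symmetric] finite_PiE S cong: sum.cong)
qed

lemma sum_PiE_eq_sum_zero_outside:
  fixes F :: "nat \<Rightarrow> nat \<Rightarrow> 'a::comm_ring_1"
  assumes S: "finite S" and F: "\<And>s j. s \<in> S \<Longrightarrow> j > d s \<Longrightarrow> F s j = 0"
  shows "(\<Sum>g\<in>{g\<in>PiE S (\<lambda>s. {..d s}). sum g S = K}. \<Prod>s\<in>S. F s (g s))
       = (\<Sum>n\<in>{n. (\<forall>s. s \<notin> S \<longrightarrow> n s = 0) \<and> sum n S = K}. \<Prod>s\<in>S. F s (n s))"
proof -
  define A where "A = {n. (\<forall>s. s \<notin> S \<longrightarrow> n s = 0) \<and> sum n S = K}"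
  define B where "B = {n\<in>A. \<forall>s\<in>S. n s \<le> d s}"
  have "finite A"
  proof (rule finite_subset)
    show "A \<subseteq> (\<lambda>g s. if s \<in> S then g s else 0) ` PiE S (\<lambda>_. {..K})"
    proof
      fix n assume n: "n \<in> A"
      then have "restrict n S \<in> PiE S (\<lambda>_. {..K})" "n = (\<lambda>s. if s \<in> S then restrict n S s else 0)"
        using member_le_sum[of _ S n] S by (auto simp: A_def)
      then show "n \<in> (\<lambda>g s. if s \<in> S then g s else 0) ` PiE S (\<lambda>_. {..K})" by blast
    qed
  qed (use S in \<open>intro finite_imageI finite_PiE, auto\<close>)
  have "(\<Sum>g\<in>{g\<in>PiE S (\<lambda>s. {..d s}). sum g S = K}. \<Prod>s\<in>S. F s (g s)) = (\<Sum>n\<in>B. \<Prod>s\<in>S. F s (n s))"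
    by (rule sum.reindex_bij_witness[of _ "\<lambda>n. restrict n S" "\<lambda>g s. if s \<in> S then g s else 0"])
      (auto simp: A_def B_def PiE_def extensional_def)
  also have "\<dots> = (\<Sum>n\<in>A. \<Prod>s\<in>S. F s (n s))"
  proof (rule sum.mono_neutral_left[OF \<open>finite A\<close>])
    show "\<forall>n\<in>A - B. (\<Prod>s\<in>S. F s (n s)) = 0"
    proof
      fix n assume "n \<in> A - B"
      then obtain s where "s \<in> S" "n s > d s" by (auto simp: B_def not_le)
      then show "(\<Prod>s\<in>S. F s (n s)) = 0" using S F by (intro prod_zero) auto
    qed
  qed (auto simp: B_def)
  finally show ?thesis by (simp add: A_def)
qed

lemma coeff_factor_prod:
  assumes S: "finite S" and t: "t \<le> sum d S"
  shows "coeff (factor_prod x S d) t = (-1) ^ (sum d S - t) *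
           (\<Sum>n\<in>{n. (\<forall>s. s \<notin> S \<longrightarrow> n s = 0) \<and> sum n S = sum d S - t}.
              \<Prod>s\<in>S. of_nat (d s choose n s) * x s ^ n s)"
proof -
  have sign: "(\<Prod>s\<in>S. of_nat (d s choose n s) * (- x s) ^ n s) =
        (-1) ^ sum n S * (\<Prod>s\<in>S. of_nat (d s choose n s) * x s ^ n s)" for n
    by (simp add: power_minus[of "x _"] prod.distrib power_sum mult_ac)
  have "coeff (factor_prod x S d) t = (\<Sum>n\<in>{n. (\<forall>s. s \<notin> S \<longrightarrow> n s = 0) \<and> sum n S = sum d S - t}.
              \<Prod>s\<in>S. of_nat (d s choose n s) * (- x s) ^ n s)"
    unfolding coeff_factor_prod_PiE[OF S t]
    by (rule sum_PiE_eq_sum_zero_outside[OF S]) (simp add: binomial_eq_0)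
  then show ?thesis by (simp add: sign sum_distrib_left)
qed

lemma of_int_floor_gchoose_of_nat:
  "(of_int \<lfloor>(of_int (int z) :: rat) gchoose j\<rfloor> :: 'k::field) = of_nat (z choose j)"
proof -
  have "(of_int (int z) :: rat) gchoose j = of_nat (z choose j)"
    by (simp add: binomial_gbinomial)
  then show ?thesis by simp
qed

lemma r_coeff_eq_coeff_factor_prod:
  fixes x :: "nat \<Rightarrow> 'k::field" and a :: "nat \<Rightarrow> nat" and m p i :: nat
  defines "e \<equiv> e_ik m a p i"
  assumes k: "k \<in> {1..r}" "e k \<ge> 1" and M: "p * j \<ge> 1"
  shows "r_coeff m r a x p i j k = coeff (factor_prod x {1..r} (e(k := e k - 1))) (p * j - 1)"
proof -
  define S where "S = {1..r::nat}"
  define d where "d = e(k := e k - 1)"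
  define N where "N = (\<Sum>s\<in>S. int (e s)) - int (p * j)"
  have S: "finite S" "k \<in> S" using k by (simp_all add: S_def)
  have d_int: "int (e s) - (if s = k then 1 else 0) = int (d s)" for s
    using k by (auto simp: d_def)
  have "int (sum d S) = (\<Sum>s\<in>S. int (e s) - (if s = k then 1 else 0))"
    by (simp add: d_int)
  then have sum_d: "int (sum d S) = N + int (p * j) - 1" using S by (simp add: sum_subtractf N_def)
  have r_coeff: "r_coeff m r a x p i j k = (-1) ^ nat N *
      (\<Sum>n\<in>{n. (\<forall>s. s \<notin> S \<longrightarrow> n s = 0) \<and> int (sum n S) = N}.
         \<Prod>s\<in>S. of_nat (d s choose n s) * x s ^ n s)"
    unfolding r_coeff_def Let_def e_def[symmetric] S_def[symmetric] N_def[symmetric] d_int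
      of_int_floor_gchoose_of_nat ..
  have "r_coeff m r a x p i j k = coeff (factor_prod x S d) (p * j - 1)"
  proof (cases "N < 0")
    case True
    then have "sum d S < p * j - 1" using sum_d M by linarith
    then have "coeff (factor_prod x S d) (p * j - 1) = 0"
      by (intro coeff_eq_0) (simp add: degree_factor_prod[OF S(1)])
    moreover have empty: "{n. (\<forall>s. s \<notin> S \<longrightarrow> n s = 0) \<and> int (sum n S) = N} = {}"
      using True by (auto simp del: of_nat_sum)
    ultimately show ?thesis unfolding r_coeff empty by simp
  next
    case False
    then have N_nat: "nat N = sum d S - (p * j - 1)" and le: "p * j - 1 \<le> sum d S"
      using sum_d M by linarith+
    have "{n. (\<forall>s. s \<notin> S \<longrightarrow> n s = 0) \<and> int (sum n S) = N} =
        {n. (\<forall>s. s \<notin> S \<longrightarrow> n s = 0) \<and> sum n S = nat N}"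
      using False by (auto simp del: of_nat_sum)
    then show ?thesis unfolding r_coeff coeff_factor_prod[OF S(1) le] N_nat by simp
  qed
  then show ?thesis by (simp add: S_def d_def)
qed

lemma of_nat_e_ik_mult_r_coeff:
  fixes x :: "nat \<Rightarrow> 'k::field" and a :: "nat \<Rightarrow> nat" and m p i :: nat
  defines "e \<equiv> e_ik m a p i"
  assumes "k \<in> {1..r}" "p * j \<ge> 1"
  shows "of_nat (e k) * r_coeff m r a x p i j k
       = of_nat (e k) * coeff (factor_prod x {1..r} (e(k := e k - 1))) (p * j - 1)"
  using r_coeff_eq_coeff_factor_prod[where x = x, OF assms(2) _ assms(3)]
  by (cases "e k = 0") (simp_all add: e_def)

section \<open>Regular functions on U and V\<close>

definition floor_poly :: "nat \<Rightarrow> nat \<Rightarrow> (nat \<Rightarrow> nat) \<Rightarrow> (nat \<Rightarrow> 'k::field) \<Rightarrow> nat \<Rightarrow> 'k poly" where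
  "floor_poly m r a x n = factor_prod x {1..r} (\<lambda>k. n * a k div m)"

definition rem_poly :: "nat \<Rightarrow> nat \<Rightarrow> (nat \<Rightarrow> nat) \<Rightarrow> (nat \<Rightarrow> 'k::field) \<Rightarrow> nat \<Rightarrow> 'k poly" where
  "rem_poly m r a x n = factor_prod x {1..r} (\<lambda>k. n * a k mod m)"

lemma hpoly_eq_factor_prod: "hpoly r a x = factor_prod x {1..r} a"
  by (simp add: hpoly_def factor_prod_def)

lemma hpoly_power_eq: "hpoly r a x ^ n = floor_poly m r a x n ^ m * rem_poly m r a x n"
  unfolding hpoly_eq_factor_prod floor_poly_def rem_poly_def factor_prod_power factor_prod_mult
  by (rule factor_prod_cong) (simp add: mult.commute)

lemma vcoef_eq_Fract: "vcoef m r a x n = Fract 1 (floor_poly m r a x n)"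
  by (simp add: vcoef_def floor_poly_def factor_prod_def)

lemma floor_poly_nonzero [simp]: "floor_poly m r a x n \<noteq> 0"
  by (simp add: floor_poly_def)

lemma rem_poly_nonzero [simp]: "rem_poly m r a x n \<noteq> 0"
  by (simp add: rem_poly_def)

lemma order_rem_poly_less: "inj_on x {1..r} \<Longrightarrow> m > 0 \<Longrightarrow> order c (rem_poly m r a x n) < m"
  unfolding rem_poly_def by (intro order_factor_prod_less) auto

lemma mpow_eq: "mpow m r a x n R = (R * to_fract (floor_poly m r a x n)) ^ m * to_fract (rem_poly m r a x n)"
  by (simp add: mpow_def hpoly_power_eq[of r a x n m] power_mult_distrib to_fract_power
      flip: to_fract_def)

lemma inU_imp_Fract_floor_poly:
  fixes x :: "nat \<Rightarrow> 'k::alg_closed_field"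
  assumes inj: "inj_on x {1..r}" and m: "m > 0" and U: "inU m r a x n R"
  obtains u where "R = Fract u (floor_poly m r a x n)"
proof -
  define D E where "D = floor_poly m r a x n" and "E = rem_poly m r a x n"
  have E0: "E \<noteq> 0" and ordE: "\<And>c. order c E < m"
    by (simp_all add: E_def order_rem_poly_less[OF inj m])
  obtain q where "mpow m r a x n R = Fract q 1" using U by (auto simp: inU_def)
  then have "(R * to_fract D) ^ m * to_fract E = Fract q ([:0,1:] ^ 0)"
    by (simp add: mpow_eq D_def E_def)
  from fract_denominator_X_power[OF m E0 ordE this] obtain u k where uk:
    "R * to_fract D = Fract u ([:0,1:] ^ k)"
    "u ^ m * E * [:0,1:] ^ 0 = q * [:0,1:] ^ (m * k)" "k > 0 \<Longrightarrow> poly u 0 \<noteq> 0"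
    by blast
  have "k = 0"
  proof (rule ccontr)
    assume k: "k \<noteq> 0"
    then have "poly u 0 \<noteq> 0" using uk(3) by simp
    then have u: "order 0 u = 0" "u \<noteq> 0" by (auto intro: order_0I)
    then have "q \<noteq> 0" using uk(2) E0 by auto
    have "order 0 (u ^ m * E) = order 0 E"
      using u E0 by (simp add: order_mult order_power)
    also have "\<dots> < m" by (rule ordE)
    also have "m \<le> m * k" using k by simp
    also have "\<dots> \<le> order 0 (q * [:0,1:] ^ (m * k))"
      using \<open>q \<noteq> 0\<close> by (simp add: order_mult order_power_n_n[of 0 "m * k", simplified])
    finally show False using uk(2) by simp
  qed
  then have "R = Fract u D" using uk(1)
    by (simp add: D_def Fract_conv_to_fract eq_divide_eq)
  then show ?thesis using that by (simp add: D_def)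
qed

lemma inV_imp_Fract_floor_poly_X_power:
  fixes x :: "nat \<Rightarrow> 'k::alg_closed_field"
  assumes inj: "inj_on x {1..r}" and m: "m > 0" and V: "inV m r a x n R"
    and deg_E: "degree (rem_poly m r a x n) > 0"
  obtains t l where "R = Fract t (floor_poly m r a x n * [:0,1:] ^ l)" "degree t < l"
proof -
  define D E where "D = floor_poly m r a x n" and "E = rem_poly m r a x n"
  have E0: "E \<noteq> 0" and ordE: "\<And>c. order c E < m"
    by (simp_all add: E_def order_rem_poly_less[OF inj m])
  obtain q e where q: "degree q \<le> e" "mpow m r a x n R = Fract q ([:0,1:] ^ e)"
    using V by (auto simp: inV_def)
  then have "(R * to_fract D) ^ m * to_fract E = Fract q ([:0,1:] ^ e)"
    by (simp add: mpow_eq D_def E_def)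
  from fract_denominator_X_power[OF m E0 ordE this] obtain u k where uk:
    "R * to_fract D = Fract u ([:0,1:] ^ k)" "u ^ m * E * [:0,1:] ^ e = q * [:0,1:] ^ (m * k)"
    by blast
  have R: "R = Fract u (D * [:0,1:] ^ k)" using uk(1)
    by (simp add: D_def Fract_conv_to_fract to_fract_power field_simps)
  show ?thesis
  proof (cases "u = 0")
    case True
    then show ?thesis using that[of 0 1] R by (simp add: fract_collapse)
  next
    case False
    then have "q \<noteq> 0" using uk(2) by (auto simp: E_def)
    then have "m * degree u + degree E + e = degree q + m * k"
      using arg_cong[OF uk(2), of degree] False
      by (simp add: E_def degree_mult_eq degree_power_eq degree_linear_power[of 0, simplified])
    then have "m * degree u < m * k" using q(1) deg_E unfolding E_def by linarith
    then have "degree u < k" by simp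
    then show ?thesis using that R by (simp add: D_def)
  qed
qed

text \<open>iota_sum m r a x n c is \<iota>(\<Sigma>_j c_j \<zeta>_{n,j}).\<close>
definition iota_sum :: "nat \<Rightarrow> nat \<Rightarrow> (nat \<Rightarrow> nat) \<Rightarrow> (nat \<Rightarrow> 'k::field) \<Rightarrow> nat \<Rightarrow> (nat \<Rightarrow> 'k) \<Rightarrow> 'k poly fract" where
  "iota_sum m r a x n c =
     (\<Sum>j\<in>{1..nat (ftau m r a (- int n))}. Fract [:c j:] 1 * vcoef m r a x n / Xf ^ j)"

lemma proj1_iota_sum:
  "proj1 m r a x n R = (THE U. inU m r a x n U \<and>
      (\<exists>c W. inV m r a x n W \<and> R = U + iota_sum m r a x n c + W))"
  by (simp add: proj1_def iota_sum_def)

lemma monom_eq_const_mult_X_power: "monom c k = [:c:] * [:0,1:] ^ k"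
  by (simp add: monom_altdef)

lemma iota_sum_mult:
  fixes x :: "nat \<Rightarrow> 'k::field"
  assumes "nat (ftau m r a (- int n)) \<le> L"
  shows "iota_sum m r a x n c * to_fract (floor_poly m r a x n * [:0,1:] ^ L)
       = to_fract (\<Sum>j\<in>{1..nat (ftau m r a (- int n))}. monom (c j) (L - j))"
proof -
  have "Fract [:c j:] 1 * vcoef m r a x n / Xf ^ j * to_fract (floor_poly m r a x n * [:0,1:] ^ L)
      = to_fract (monom (c j) (L - j))" if "j \<le> L" for j
  proof -
    have "[:0,1::'k:] ^ L = [:0,1:] ^ (L - j) * [:0,1:] ^ j" using that by (simp flip: power_add)
    moreover have "to_fract (monom (c j) (L - j)) = to_fract [:c j:] * to_fract [:0,1:] ^ (L - j)"
      by (simp only: monom_eq_const_mult_X_power to_fract_mult to_fract_power)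
    ultimately show ?thesis
      by (simp add: vcoef_eq_Fract Xf_def Fract_conv_to_fract to_fract_power field_simps)
  qed
  then show ?thesis
    unfolding iota_sum_def sum_distrib_right to_fract_sum using assms by (intro sum.cong) auto
qed

lemma coeff_X_power_mult_add:
  assumes "\<And>i. i \<ge> L \<Longrightarrow> coeff w i = 0"
  shows "coeff ([:0,1:] ^ L * u + w) (L + d) = coeff u d"
  using assms by (simp add: monom_altdef[of 1 L, simplified, symmetric] coeff_monom_mult)

text \<open>The sum O(U\<inter>V) = O(U) + \<iota>(Q) + O(V) is direct on each isotypic part: multiplying a
  relation by the common denominator D x^L, the O(U)-parts become the coefficients of
  degree \<ge> L, while \<iota>(Q) and O(V) only contribute in degrees below L.\<close>
lemma inU_component_unique:
  fixes x :: "nat \<Rightarrow> 'k::alg_closed_field"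
  assumes inj: "inj_on x {1..r}" and m: "m > 0" and deg_E: "degree (rem_poly m r a x n) > 0"
    and U: "inU m r a x n U" "inU m r a x n U'" and W: "inV m r a x n W" "inV m r a x n W'"
    and eq: "U + iota_sum m r a x n c + W = U' + iota_sum m r a x n c' + W'"
  shows "U = U'"
proof -
  define D where "D = floor_poly m r a x n"
  define f where "f = nat (ftau m r a (- int n))"
  obtain u u' where u: "U = Fract u D" "U' = Fract u' D"
    using inU_imp_Fract_floor_poly[OF inj m U(1)] inU_imp_Fract_floor_poly[OF inj m U(2)]
    by (metis D_def)
  obtain t l t' l' where t: "W = Fract t (D * [:0,1:] ^ l)" "degree t < l"
    "W' = Fract t' (D * [:0,1:] ^ l')" "degree t' < l'"
    using inV_imp_Fract_floor_poly_X_power[OF inj m W(1) deg_E]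
      inV_imp_Fract_floor_poly_X_power[OF inj m W(2) deg_E] by (metis D_def)
  define L where "L = l + l' + f"
  have lL: "l \<le> L" "l' \<le> L" by (simp_all add: L_def)
  have scaled: "(Fract v D + iota_sum m r a x n b + Fract s (D * [:0,1:] ^ k)) * to_fract (D * [:0,1:] ^ L)
      = to_fract ([:0,1:] ^ L * v + ((\<Sum>j\<in>{1..f}. monom (b j) (L - j)) + s * [:0,1:] ^ (L - k)))"
    if "k \<le> L" for v s :: "'k poly" and b :: "nat \<Rightarrow> 'k" and k
  proof -
    have "[:0,1::'k:] ^ L = [:0,1:] ^ (L - k) * [:0,1:] ^ k" using that by (simp flip: power_add)
    then show ?thesis
      using iota_sum_mult[of m r a n L x b] by (simp add: D_def L_def f_def distrib_right
          Fract_conv_to_fract to_fract_power field_simps)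
  qed
  have low: "coeff ((\<Sum>j\<in>{1..f}. monom (b j) (L - j)) + s * [:0,1:] ^ (L - k)) i = 0"
    if "degree s < k" "k \<le> L" "L \<le> i" for s :: "'k poly" and b :: "nat \<Rightarrow> 'k" and k i
  proof -
    have "coeff (s * [:0,1:] ^ (L - k)) i = 0"
    proof (cases "s = 0")
      case False
      then have "degree (s * [:0,1:] ^ (L - k)) = degree s + (L - k)"
        by (simp add: degree_mult_eq degree_linear_power[of 0, simplified])
      then show ?thesis using that by (intro coeff_eq_0) simp
    qed simp
    then show ?thesis using that by (auto simp: coeff_sum coeff_monom intro!: sum.neutral)
  qed
  have "[:0,1:] ^ L * u + ((\<Sum>j\<in>{1..f}. monom (c j) (L - j)) + t * [:0,1:] ^ (L - l))
      = [:0,1:] ^ L * u' + ((\<Sum>j\<in>{1..f}. monom (c' j) (L - j)) + t' * [:0,1:] ^ (L - l'))"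
  proof -
    have "(U + iota_sum m r a x n c + W) * to_fract (D * [:0,1:] ^ L)
        = (U' + iota_sum m r a x n c' + W') * to_fract (D * [:0,1:] ^ L)"
      using eq by simp
    then show ?thesis unfolding u t scaled[OF lL(1)] scaled[OF lL(2)]
      by (simp only: to_fract_eq_iff)
  qed
  then have "coeff u d = coeff u' d" for d
    using coeff_X_power_mult_add[where L = L and u = u and d = d, OF low[where b = c, OF t(2) lL(1)]]
      coeff_X_power_mult_add[where L = L and u = u' and d = d, OF low[where b = c', OF t(4) lL(2)]] by simp
  then have "u = u'" by (simp add: poly_eq_iff)
  then show ?thesis using u by simp
qed

lemma poly_split_shift_cutoff:
  fixes G :: "'k::field poly" and N f :: nat
  defines "cc \<equiv> \<lambda>l. if l \<le> N then coeff G (N - l) else 0"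
  shows "G = [:0,1:] ^ N * poly_shift N G + poly_cutoff (N - f) G + (\<Sum>l\<in>{1..f}. monom (cc l) (N - l))"
proof (rule poly_eqI)
  fix i
  have "coeff (\<Sum>l\<in>{1..f}. monom (cc l) (N - l)) i
      = (\<Sum>l\<in>{1..f}. if l = N - i then (if i < N then coeff G i else 0) else 0)"
    unfolding coeff_sum by (intro sum.cong refl) (auto simp: coeff_monom cc_def)
  also have "\<dots> = (if N - i \<in> {1..f} then (if i < N then coeff G i else 0) else 0)"
    by (rule sum.delta) simp
  finally show "coeff G i = coeff ([:0,1:] ^ N * poly_shift N G + poly_cutoff (N - f) G
      + (\<Sum>l\<in>{1..f}. monom (cc l) (N - l))) i"
    by (cases "i < N - f"; cases "i < N")
      (auto simp: coeff_poly_cutoff coeff_poly_shift coeff_monom_mult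
        monom_altdef[of 1 N, simplified, symmetric])
qed

lemma Fract_X_power_decomposition:
  fixes x :: "nat \<Rightarrow> 'k::field" and G :: "'k poly" and a :: "nat \<Rightarrow> nat" and m r n N :: nat
  defines "f \<equiv> nat (ftau m r a (- int n))" and "D \<equiv> floor_poly m r a x n"
  defines "cc \<equiv> \<lambda>l. if l \<le> N then coeff G (N - l) else 0"
  shows "Fract G (D * [:0,1:] ^ N)
       = Fract (poly_shift N G) D + iota_sum m r a x n cc + Fract (poly_cutoff (N - f) G) (D * [:0,1:] ^ N)"
proof -
  define t0 where "t0 = poly_cutoff (N - f) G"
  have X: "[:0,1:] ^ (N + f) = [:0,1::'k:] ^ N * [:0,1:] ^ f" by (simp add: power_add)
  have split: "G = [:0,1:] ^ N * poly_shift N G + t0 + (\<Sum>l\<in>{1..f}. monom (cc l) (N - l))"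
    unfolding t0_def cc_def by (rule poly_split_shift_cutoff)
  have "[:0,1:] ^ f * monom (cc l) (N - l) = monom (cc l) (N + f - l)" for l
    by (cases "l \<le> N") (auto simp: cc_def monom_eq_const_mult_X_power add.commute[of f]
        power_add[symmetric])
  then have "G * [:0,1:] ^ f = [:0,1:] ^ (N + f) * poly_shift N G
      + (\<Sum>l\<in>{1..f}. monom (cc l) (N + f - l)) + t0 * [:0,1:] ^ f"
    using arg_cong[OF split, of "\<lambda>z. z * [:0,1:] ^ f"]
    by (simp add: X algebra_simps sum_distrib_left)
  moreover have "Fract G (D * [:0,1:] ^ N) * to_fract (D * [:0,1:] ^ (N + f)) = to_fract (G * [:0,1:] ^ f)"
    "Fract (poly_shift N G) D * to_fract (D * [:0,1:] ^ (N + f))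
       = to_fract ([:0,1:] ^ (N + f) * poly_shift N G)"
    "Fract t0 (D * [:0,1:] ^ N) * to_fract (D * [:0,1:] ^ (N + f)) = to_fract (t0 * [:0,1:] ^ f)"
    by (simp_all add: D_def X Fract_conv_to_fract to_fract_power)
  moreover have "iota_sum m r a x n cc * to_fract (D * [:0,1:] ^ (N + f))
      = to_fract (\<Sum>l\<in>{1..f}. monom (cc l) (N + f - l))"
    unfolding D_def f_def by (rule iota_sum_mult) simp
  ultimately have "Fract G (D * [:0,1:] ^ N) * to_fract (D * [:0,1:] ^ (N + f))
      = (Fract (poly_shift N G) D + iota_sum m r a x n cc + Fract t0 (D * [:0,1:] ^ N))
        * to_fract (D * [:0,1:] ^ (N + f))"
    by (simp only: distrib_right to_fract_add)
  then show ?thesis by (simp add: D_def t0_def)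
qed

lemma inU_Fract_floor_poly: "inU m r a x n (Fract u (floor_poly m r a x n))"
  unfolding inU_def mpow_eq
  by (rule exI[of _ "u ^ m * rem_poly m r a x n"]) (simp add: Fract_conv_to_fract to_fract_power)

lemma inV_Fract_poly_cutoff:
  fixes x :: "nat \<Rightarrow> 'k::field" and G :: "'k poly" and a :: "nat \<Rightarrow> nat" and m r n N :: nat
  defines "f \<equiv> nat (ftau m r a (- int n))"
  assumes m: "m > 0" and deg_E: "degree (rem_poly m r a x n) = m * (f + 1)"
  shows "inV m r a x n (Fract (poly_cutoff (N - f) G) (floor_poly m r a x n * [:0,1:] ^ N))"
proof -
  define t0 E where "t0 = poly_cutoff (N - f) G" and "E = rem_poly m r a x n"
  have "mpow m r a x n (Fract t0 (floor_poly m r a x n * [:0,1:] ^ N)) = Fract (t0 ^ m * E) ([:0,1:] ^ (N * m))"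
    by (simp add: mpow_eq E_def Fract_conv_to_fract to_fract_power power_mult power_divide field_simps)
  moreover have "degree (t0 ^ m * E) \<le> N * m"
  proof (cases "t0 = 0")
    case False
    then have "f < N" unfolding t0_def by (auto simp: poly_eq_iff coeff_poly_cutoff split: if_splits)
    have "degree t0 \<le> N - f - 1"
      by (rule degree_le) (auto simp: t0_def coeff_poly_cutoff)
    then have "degree (t0 ^ m * E) \<le> m * (N - f - 1) + m * (f + 1)"
      using False by (simp add: degree_mult_eq degree_power_eq E_def deg_E)
    also have "\<dots> = m * (N - f - 1 + (f + 1))" by (simp only: add_mult_distrib2)
    also have "\<dots> = N * m" using \<open>f < N\<close> by simp
    finally show ?thesis .
  qed (use m in \<open>simp add: zero_power\<close>)
  ultimately show ?thesis unfolding inV_def t0_def by blast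
qed

text \<open>Only the first N coefficients of G can fail to be divisible by x^N; of these, the
  top f are absorbed by \<iota>(Q) and the rest is regular on V.\<close>
lemma proj1_Fract_X_power:
  fixes x :: "nat \<Rightarrow> 'k::alg_closed_field"
  assumes inj: "inj_on x {1..r}" and m: "m > 0"
    and deg_E: "degree (rem_poly m r a x n) = m * (nat (ftau m r a (- int n)) + 1)"
  shows "proj1 m r a x n (Fract G (floor_poly m r a x n * [:0,1:] ^ N))
       = Fract (poly_shift N G) (floor_poly m r a x n)"
  unfolding proj1_iota_sum
proof (rule the_equality)
  note decomp = Fract_X_power_decomposition[where x = x and G = G and N = N and n = n and m = m
      and r = r and a = a]
  note inV = inV_Fract_poly_cutoff[where G = G and N = N, OF m deg_E]
  show "inU m r a x n (Fract (poly_shift N G) (floor_poly m r a x n)) \<and> (\<exists>c W. inV m r a x n W \<and>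
      Fract G (floor_poly m r a x n * [:0,1:] ^ N)
        = Fract (poly_shift N G) (floor_poly m r a x n) + iota_sum m r a x n c + W)"
    using inU_Fract_floor_poly decomp inV by blast
  fix U assume "inU m r a x n U \<and> (\<exists>c W. inV m r a x n W \<and>
      Fract G (floor_poly m r a x n * [:0,1:] ^ N) = U + iota_sum m r a x n c + W)"
  then obtain c W where U: "inU m r a x n U" and W: "inV m r a x n W"
    and eq: "Fract G (floor_poly m r a x n * [:0,1:] ^ N) = U + iota_sum m r a x n c + W" by blast
  have "degree (rem_poly m r a x n) > 0" using deg_E m by simp
  from inU_component_unique[OF inj m this U inU_Fract_floor_poly W inV eq[unfolded decomp, symmetric]]
  show "U = Fract (poly_shift N G) (floor_poly m r a x n)" .
qed

section \<open>Differentials\<close>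

lemma fract_deriv_Fract:
  fixes u v :: "'k::field poly"
  assumes v: "v \<noteq> 0"
  shows "fract_deriv (Fract u v) = Fract (pderiv u * v - u * pderiv v) (v * v)"
proof -
  define uv where "uv = (SOME (u', v'). v' \<noteq> 0 \<and> Fract u v = Fract u' v')"
  have "(\<lambda>(u', v'). v' \<noteq> 0 \<and> Fract u v = Fract u' v') uv"
    unfolding uv_def using v by (intro someI_ex[of "\<lambda>(u', v'). _ u' v'"]) auto
  then obtain u' v' where uv': "uv = (u', v')" "v' \<noteq> 0" and eq: "u * v' = u' * v"
    using v by (cases uv) (auto simp: eq_fract)
  have deq: "pderiv u * v' + u * pderiv v' = pderiv u' * v + u' * pderiv v"
    using arg_cong[OF eq, of pderiv] by (simp add: pderiv_mult algebra_simps)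
  have "(pderiv u' * v' - u' * pderiv v') * (v * v)
      = v' * v * (pderiv u * v' + u * pderiv v' - u' * pderiv v) - v * pderiv v' * (u' * v)"
    using deq by (simp add: algebra_simps)
  also have "\<dots> = v' * v * (pderiv u * v' + u * pderiv v') - v' * pderiv v * (u * v')
                  - v * pderiv v' * (u * v')"
    by (simp add: algebra_simps eq)
  also have "\<dots> = (pderiv u * v - u * pderiv v) * (v' * v')"
    by (simp add: algebra_simps)
  finally show ?thesis
    unfolding fract_deriv_def uv_def[symmetric] uv'(1) using v uv'(2) by (simp add: eq_fract)
qed

text \<open>As y^n v_(m-n) = h/D', the left-hand side is the polynomial P with
  d(u y^n/D) = P dx / v_(m-n); LD and Lh are the numerators, over H, of the logarithmic
  derivatives of D and h.\<close>
lemma dhom_Fract_times_complement: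
  fixes u D D' H LD Lh Le :: "'k::field poly"
  assumes nz: "D \<noteq> 0" "D' \<noteq> 0" "H \<noteq> 0" "(of_nat m :: 'k) \<noteq> 0"
    and h: "hpoly r a x = D * D' * H"
    and dD: "pderiv D * H = D * LD" and dh: "pderiv (hpoly r a x) * H = hpoly r a x * Lh"
    and L: "smult (of_nat n) Lh = smult (of_nat m) (LD - Le)"
  shows "dhom m r a x n (Fract u D) * Fract 1 D' * to_fract (hpoly r a x)
       = to_fract (H * pderiv u - u * Le)"
proof -
  define hp where "hp = hpoly r a x"
  have "to_fract (of_nat m :: 'k poly) \<noteq> 0" using nz(4) by (simp add: of_nat_poly)
  then have m: "(of_nat m :: 'k poly fract) \<noteq> 0" by (simp add: to_fract_of_nat)
  have hp0: "to_fract hp \<noteq> 0" using nz by (simp add: hp_def h)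
  have deriv: "fract_deriv (Fract u D)
      = (to_fract (pderiv u) - to_fract u * to_fract LD / to_fract H) / to_fract D"
    unfolding fract_deriv_Fract[OF nz(1)] using arg_cong[OF dD, of to_fract] nz(1,3)
    by (simp add: Fract_conv_to_fract field_simps)
  have log_h: "Fract (smult (of_nat n) (pderiv hp)) (smult (of_nat m) hp)
      = of_nat n * to_fract Lh / (of_nat m * to_fract H)"
    using arg_cong[OF dh, of to_fract] nz(3) m hp0
    by (simp add: hp_def Fract_conv_to_fract to_fract_of_nat field_simps flip: of_nat_mult_conv_smult)
  have L': "of_nat n * to_fract Lh / of_nat m = to_fract LD - to_fract Le"
    using arg_cong[OF L, of to_fract] m
    by (simp add: to_fract_of_nat field_simps flip: of_nat_mult_conv_smult)
  have "dhom m r a x n (Fract u D) * Fract 1 D' * to_fract hp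
      = to_fract H * to_fract (pderiv u) - to_fract u * to_fract LD
        + to_fract u * (of_nat n * to_fract Lh / of_nat m)"
    unfolding dhom_def hp_def[symmetric] deriv log_h
    using nz m by (simp add: h hp_def Fract_conv_to_fract field_simps)
  also have "\<dots> = to_fract (H * pderiv u - u * Le)"
    unfolding L' by (simp add: algebra_simps)
  finally show ?thesis by (simp add: hp_def)
qed

lemma div_mult_mod_exponents:
  fixes m p i a :: nat
  assumes "m > 0"
  shows "(p * i div m) * a + ((p * i mod m) * a) div m = (p * (i * a mod m)) div m + p * (i * a div m)"
proof -
  have "p * i * a = m * ((p * i div m) * a) + (p * i mod m) * a"
    by (metis add_mult_distrib div_mult_mod_eq mult.assoc mult.commute)
  then have "p * i * a div m = (p * i div m) * a + ((p * i mod m) * a) div m"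
    using assms by simp
  moreover have "p * i * a = m * (p * (i * a div m)) + p * (i * a mod m)"
    by (metis add_mult_distrib2 div_mult_mod_eq mult.assoc mult.commute)
  then have "p * i * a div m = p * (i * a div m) + (p * (i * a mod m)) div m"
    using assms by simp
  ultimately show ?thesis by simp
qed

lemma div_add_complement_div:
  fixes m n a :: nat
  assumes "n < m" "n * a mod m \<noteq> 0"
  shows "n * a div m + (m - n) * a div m + 1 = a"
proof -
  define b c where "b = n * a div m" and "c = n * a mod m"
  have m: "m > 0" and c: "0 < c" "c < m" using assms by (auto simp: c_def)
  have na: "n * a = m * b + c" by (simp add: b_def c_def)
  have "a > 0" using assms(2) by (cases a) auto
  then have "n * a < m * a" using assms(1) by simp
  then have "b < a" using na by (metis add_lessD1 nat_mult_less_cancel_disj)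
  then obtain q where q: "a = Suc (b + q)" using less_imp_Suc_add by blast
  have "m * a = m * q + m * b + m" using q by (simp add: algebra_simps)
  moreover have "(m - n) * a = m * a - n * a" by (simp add: diff_mult_distrib)
  ultimately have "(m - n) * a = (m - c) + m * q" using na c by linarith
  then have "(m - n) * a div m = ((m - c) + m * q) div m" by simp
  also have "\<dots> = q" using c by (subst div_mult_self2) auto
  finally have "(m - n) * a div m = q" .
  then show ?thesis using q unfolding b_def[symmetric] by linarith
qed

lemma of_nat_mod_mult_e_ik:
  fixes m p i :: nat and a :: "nat \<Rightarrow> nat"
  assumes "CHAR('k::comm_ring_1) = p" "m > 0"
  shows "(of_nat ((p * i mod m) * a k mod m) :: 'k) = - of_nat m * of_nat (e_ik m a p i k)"
proof -
  have "(p * i mod m) * a k mod m = p * (i * a k mod m) mod m"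
    by (metis mod_mult_left_eq mod_mult_right_eq mult.assoc)
  then have "(p * i mod m) * a k mod m + m * e_ik m a p i k = p * (i * a k mod m)"
    by (simp add: e_ik_def)
  moreover have "(of_nat (p * (i * a k mod m)) :: 'k) = 0"
    using of_nat_CHAR[where 'a = 'k] assms(1) by simp
  ultimately show ?thesis
    by (metis add_eq_0_iff2 mult_minus_left of_nat_add of_nat_mult)
qed

lemma zeta_power_eq_Fract:
  fixes x :: "nat \<Rightarrow> 'k::field"
  assumes "m > 0"
  shows "(vcoef m r a x i / Xf ^ j) ^ p * Fract (hpoly r a x ^ (p * i div m)) 1
       = Fract (factor_prod x {1..r} (e_ik m a p i)) (floor_poly m r a x (p * i mod m) * [:0,1:] ^ (p * j))"
proof -
  define G where "G = factor_prod x {1..r} (e_ik m a p i)"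
  have "hpoly r a x ^ (p * i div m) * floor_poly m r a x (p * i mod m) = G * floor_poly m r a x i ^ p"
    unfolding hpoly_eq_factor_prod floor_poly_def G_def factor_prod_power factor_prod_mult
    by (rule factor_prod_cong) (simp add: e_ik_def div_mult_mod_exponents[OF assms])
  then have "to_fract (hpoly r a x ^ (p * i div m)) * to_fract (floor_poly m r a x (p * i mod m))
      = to_fract G * to_fract (floor_poly m r a x i) ^ p"
    by (metis to_fract_mult to_fract_power)
  then show ?thesis
    by (simp add: G_def vcoef_eq_Fract Xf_def Fract_conv_to_fract to_fract_power power_mult
        power_divide field_simps)
qed

lemma degree_rem_poly_eq_ftau:
  assumes m: "m > 0" and r: "r \<ge> 1" and sum: "(\<Sum>k\<in>{1..r}. a k) mod m = 0"
    and nz: "\<And>k. k \<in> {1..r} \<Longrightarrow> n * a k mod m \<noteq> 0"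
  shows "degree (rem_poly m r a x n) = m * (nat (ftau m r a (- int n)) + 1)"
proof -
  define s where "s = (\<Sum>k\<in>{1..r}. n * a k mod m)"
  have "s mod m = (n * (\<Sum>k\<in>{1..r}. a k)) mod m"
    unfolding s_def by (simp add: mod_sum_eq sum_distrib_left)
  also have "\<dots> = 0" using sum by (metis mod_mult_right_eq mult_0_right mod_0)
  finally have "m dvd s" by (simp add: mod_eq_0_iff_dvd)
  then obtain M where M: "s = m * M" by blast
  have "0 < n * a 1 mod m" using nz[of 1] r by simp
  also have "n * a 1 mod m \<le> s" unfolding s_def using r by (intro member_le_sum) auto
  finally have "M \<ge> 1" using M by (cases M) auto
  have "(\<Sum>k\<in>{1..r}. (- (- int n)) * int (a k) mod int m) = int s"
    by (simp add: s_def zmod_int)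
  then have "nat (ftau m r a (- int n)) = M - 1"
    using M m by (simp add: ftau_def zdiv_int)
  then show ?thesis
    using M \<open>M \<ge> 1\<close> by (simp add: rem_poly_def degree_factor_prod s_def)
qed

lemma hpoly_eq_floor_poly_complement:
  assumes "n < m" "\<And>k. k \<in> {1..r} \<Longrightarrow> n * a k mod m \<noteq> 0"
  shows "hpoly r a x = floor_poly m r a x n * floor_poly m r a x (m - n) * (\<Prod>s\<in>{1..r}. [:- x s, 1:])"
proof -
  have H: "(\<Prod>s\<in>{1..r}. [:- x s, 1:]) = factor_prod x {1..r} (\<lambda>_. 1)"
    by (simp add: factor_prod_def)
  show ?thesis
    unfolding H hpoly_eq_factor_prod floor_poly_def factor_prod_mult
    by (intro factor_prod_cong) (use div_add_complement_div[OF assms] in auto)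
qed

lemma smult_sum_e_ik_relation:
  fixes Q :: "nat \<Rightarrow> 'k::comm_ring_1 poly" and m p i :: nat
  assumes "CHAR('k) = p" "m > 0"
  defines "n \<equiv> p * i mod m"
  shows "smult (of_nat n) (\<Sum>k\<in>S. smult (of_nat (a k)) (Q k))
       = smult (of_nat m) ((\<Sum>k\<in>S. smult (of_nat (n * a k div m)) (Q k))
                          - (\<Sum>k\<in>S. smult (of_nat (e_ik m a p i k)) (Q k)))"
proof -
  have "(of_nat n * of_nat (a k) :: 'k) = of_nat m * (of_nat (n * a k div m) - of_nat (e_ik m a p i k))" for k
  proof -
    have "(of_nat n * of_nat (a k) :: 'k) = of_nat (m * (n * a k div m) + n * a k mod m)"
      by (metis div_mult_mod_eq mult.commute of_nat_mult)
    also have "\<dots> = of_nat m * of_nat (n * a k div m) - of_nat m * of_nat (e_ik m a p i k)"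
      unfolding of_nat_add of_nat_mult[of m] n_def of_nat_mod_mult_e_ik[OF assms(1,2)] by simp
    finally show ?thesis by (simp add: algebra_simps)
  qed
  then show ?thesis
    by (simp add: smult_sum_right smult_diff_right sum_subtractf[symmetric] smult_diff_left
        flip: right_diff_distrib) (simp add: right_diff_distrib smult_diff_left)
qed

lemma coprime_mult_mod_nonzero:
  fixes n m b :: nat
  assumes "coprime n m" "0 < b" "b < m"
  shows "n * b mod m \<noteq> 0"
proof
  assume "n * b mod m = 0"
  then have "m dvd b" using assms(1) by (simp add: mod_eq_0_iff_dvd coprime_dvd_mult_right_iff coprime_commute)
  then show False using assms(2,3) by (auto dest: nat_dvd_not_less)
qed

lemma psi_coeff_eq_coeff_shifted:
  fixes x :: "nat \<Rightarrow> 'k::alg_closed_field" and a :: "nat \<Rightarrow> nat" and m r p i j j' :: nat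
  assumes m: "m \<ge> 2" and r: "r \<ge> 1" and a: "\<And>k. k \<in> {1..r} \<Longrightarrow> 0 < a k \<and> a k < m"
    and sum: "(\<Sum>k\<in>{1..r}. a k) mod m = 0" and inj: "inj_on x {1..r}"
    and p: "prime p" "\<not> p dvd m" "CHAR('k) = p" and i: "coprime i m"
  defines "G \<equiv> poly_shift (p * j) (factor_prod x {1..r} (e_ik m a p i))"
  shows "psi_coeff m r a x p i j j' =
    coeff ((\<Prod>s\<in>{1..r}. [:- x s, 1:]) * pderiv G
           - G * (\<Sum>k\<in>{1..r}. smult (of_nat (e_ik m a p i k)) (\<Prod>s\<in>{1..r} - {k}. [:- x s, 1:]))) (j' - 1)"
proof -
  define S where "S = {1..r}"
  define n where "n = p * i mod m"
  define H where "H = (\<Prod>s\<in>S. [:- x s, 1:])"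
  define Q where "Q k = (\<Prod>s\<in>S - {k}. [:- x s, 1:])" for k
  define Le where "Le = (\<Sum>k\<in>S. smult (of_nat (e_ik m a p i k)) (Q k))"
  have m0: "m > 0" using m by simp
  have "coprime p m" using p(1,2) by (rule prime_imp_coprime)
  then have "coprime n m" using i m0 unfolding n_def by simp
  then have "n \<noteq> 0" using m by (intro notI) simp
  then have n: "0 < n" "n < m" using m0 by (simp_all add: n_def)
  have n_a: "n * a k mod m \<noteq> 0" if "k \<in> S" for k
    using coprime_mult_mod_nonzero[OF \<open>coprime n m\<close>] a[of k] that by (simp add: S_def)
  have proj: "proj1 m r a x n ((vcoef m r a x i / Xf ^ j) ^ p * Fract (hpoly r a x ^ (p * i div m)) 1)
      = Fract G (floor_poly m r a x n)"
    unfolding zeta_power_eq_Fract[OF m0] G_def n_def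
    by (intro proj1_Fract_X_power[OF inj m0] degree_rem_poly_eq_ftau[OF m0 r sum]) (use n_a in \<open>simp_all add: S_def n_def\<close>)
  have char_m: "(of_nat m :: 'k) \<noteq> 0" using p by (simp add: of_nat_eq_0_iff_char_dvd)
  have h: "hpoly r a x = floor_poly m r a x n * floor_poly m r a x (m - n) * H"
    unfolding H_def S_def by (rule hpoly_eq_floor_poly_complement) (use n n_a in \<open>simp_all add: S_def\<close>)
  have dD: "pderiv (floor_poly m r a x n) * H
      = floor_poly m r a x n * (\<Sum>k\<in>S. smult (of_nat (n * a k div m)) (Q k))"
    unfolding floor_poly_def H_def Q_def S_def by (rule pderiv_factor_prod_logarithmic) simp
  have dh: "pderiv (hpoly r a x) * H = hpoly r a x * (\<Sum>k\<in>S. smult (of_nat (a k)) (Q k))"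
    unfolding hpoly_eq_factor_prod H_def Q_def S_def by (rule pderiv_factor_prod_logarithmic) simp
  have "smult (of_nat n) (\<Sum>k\<in>S. smult (of_nat (a k)) (Q k))
      = smult (of_nat m) ((\<Sum>k\<in>S. smult (of_nat (n * a k div m)) (Q k)) - Le)"
    unfolding Le_def n_def by (rule smult_sum_e_ik_relation[OF p(3) m0])
  moreover have "H \<noteq> 0" by (simp add: H_def S_def)
  ultimately have "dhom m r a x n (Fract G (floor_poly m r a x n)) * Fract 1 (floor_poly m r a x (m - n))
      * to_fract (hpoly r a x) = to_fract (H * pderiv G - G * Le)"
    by (intro dhom_Fract_times_complement[OF floor_poly_nonzero floor_poly_nonzero _ char_m h dD dh])
  moreover have "(m - n) mod m = m - n" "(n + (m - n)) div m = 1" using n by simp_all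
  ultimately show ?thesis
    unfolding psi_coeff_def Let_def n_def[symmetric] proj
    by (simp add: vcoef_eq_Fract H_def Q_def Le_def S_def to_fract_def The_Fract_1_eq)
qed

theorem proposition5p3:
  fixes m r p i j j' :: nat and a :: "nat \<Rightarrow> nat" and x :: "nat \<Rightarrow> 'k::alg_closed_field"
  assumes "m \<ge> 2" and "r \<ge> 3"
    and "\<forall>k\<in>{1..r}. 1 \<le> a k \<and> a k \<le> m - 1"
    and "(\<Sum>k\<in>{1..r}. a k) mod m = 0"
    and "Gcd (insert m (a ` {1..r})) = 1"
    and "prime p" and "\<not> p dvd m"
    and "CHAR('k) = p"
    and "\<forall>c::'k. \<exists>n>0. c ^ (p ^ n) = c"
    and "inj_on x {1..r}"
    and "1 \<le> i" and "i \<le> m - 1" and "coprime i m"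
    and "1 \<le> j" and "int j \<le> ftau m r a (- int i)"
    and "1 \<le> j'" and "int j' \<le> ftau m r a (int (p * i))"
  shows "psi_coeff m r a x p i j j' =
           - (\<Sum>k\<in>{1..r}. of_nat (e_ik m a p i k) * r_coeff m r a x p i j k * q_coeff r x j' k)"
proof -
  define e where "e = e_ik m a p i"
  define Q where "Q k = (\<Prod>s\<in>{1..r} - {k}. [:- x s, 1:])" for k
  have a: "0 < a k \<and> a k < m" if "k \<in> {1..r}" for k using assms(1,3) that by fastforce
  have r: "r \<ge> 1" using assms(2) by simp
  have N: "p * j \<ge> 1" "(of_nat (p * j) :: 'k) = 0"
    using assms(6,8,14) of_nat_CHAR[where 'a = 'k] prime_gt_0_nat[of p] by simp_all
  have "psi_coeff m r a x p i j j' = coeff (- (\<Sum>k\<in>{1..r}.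
      smult (of_nat (e k) * coeff (factor_prod x {1..r} (e(k := e k - 1))) (p * j - 1)) (Q k))) (j' - 1)"
    using psi_coeff_eq_coeff_shifted[OF assms(1) r a assms(4,10,6,7,8,13), of j j']
    unfolding poly_shift_factor_prod_logarithmic[OF finite_atLeastAtMost N] e_def Q_def .
  also have "\<dots> = - (\<Sum>k\<in>{1..r}.
      of_nat (e k) * coeff (factor_prod x {1..r} (e(k := e k - 1))) (p * j - 1) * coeff (Q k) (j' - 1))"
    by (simp add: coeff_sum)
  also have "\<dots> = - (\<Sum>k\<in>{1..r}. of_nat (e k) * r_coeff m r a x p i j k * q_coeff r x j' k)"
  proof (intro arg_cong[of _ _ uminus] sum.cong refl)
    fix k assume "k \<in> {1..r}"
    then show "of_nat (e k) * coeff (factor_prod x {1..r} (e(k := e k - 1))) (p * j - 1) * coeff (Q k) (j' - 1)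
        = of_nat (e k) * r_coeff m r a x p i j k * q_coeff r x j' k"
      unfolding e_def Q_def q_coeff_def by (simp only: of_nat_e_ik_mult_r_coeff[OF _ N(1)])
  qed
  finally show ?thesis by (simp add: e_def)
qed

end
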